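(* Let $q\le p$, $\tau^2>0$, $c>1$, let $H\in\mathbb{R}^{q\times p}$ have full rank $q$, let $\Sigma\in\mathbb{R}^{q\times q}$ be symmetric positive definite, and let $\lambda_1^{\Psi},\dots,\lambda_q^{\Psi}$ be the eigenvalues of $\Psi=\Sigma^{-1/2}HH^T\Sigma^{-1/2}$. If $$\sum_{i=1}^{q}\frac{1}{\left(1+(\tau^2\lambda_i^{\Psi})^{-1}\right)^2}>\frac{q}{c},$$ then $$(\sqrt{c}-1)\,\tau^2>\frac{1}{\max_{1\le i\le q}\lambda_i^{\Psi}}.$$
   Context: $\Sigma^{-1/2}$ is the symmetric positive definite inverse square root of $\Sigma$; $\Psi$ is symmetric positive definite, so all $\lambda_i^{\Psi}>0$. *)

theory Defs
  imports "HOL-Analysis.Analysis" "HOL-Computational_Algebra.Polynomial"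
begin

definition charpoly :: "real^'n^'n \<Rightarrow> real poly" where
  "charpoly A = det (\<chi> i j. (if i = j then [:0, 1:] else 0) - [:A $ i $ j:])"

definition symmetric_matrix :: "real^'n^'n \<Rightarrow> bool" where
  "symmetric_matrix A \<longleftrightarrow> transpose A = A"

definition pos_def_matrix :: "real^'n^'n \<Rightarrow> bool" where
  "pos_def_matrix A \<longleftrightarrow> symmetric_matrix A \<and> (\<forall>x. x \<noteq> 0 \<longrightarrow> x \<bullet> (A *v x) > 0)"

end

theory Submission
  imports Defs
begin

(* Because S is symmetric and injective, \<Psi> = (S H)(S H)\<^sup>T has quadratic form
  x \<mapsto> \<parallel>H\<^sup>T S x\<parallel>\<^sup>2, which is positive as H\<^sup>T is injective; hence every root of its
  characteristic polynomial is a positive eigenvalue. The summand 1 / (1 + 1 / (\<tau>\<^sup>2 \<lambda>))\<^sup>2 is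
  increasing in \<lambda> > 0, so the hypothesis yields 1 / c < 1 / (1 + 1 / (\<tau>\<^sup>2 \<lambda>\<^sub>m\<^sub>a\<^sub>x))\<^sup>2,
  i.e. 1 + 1 / (\<tau>\<^sup>2 \<lambda>\<^sub>m\<^sub>a\<^sub>x) < \<surd>c, which rearranges to the claim. *)

lemma poly_charpoly: "poly (charpoly A) x = det (\<chi> i j. (if i = j then x else 0) - A $ i $ j)"
  unfolding charpoly_def det_def
  by (auto simp add: poly_sum poly_prod intro!: sum.cong prod.cong)

lemma det_eq_0_imp_kernel_nonzero:
  fixes A :: "'a::field^'n^'n"
  assumes "det A = 0"
  shows "\<exists>v. v \<noteq> 0 \<and> A *v v = 0"
proof -
  have "\<not> inj ((*v) A)"
    using assms invertible_det_nz[of A] invertible_left_inverse[of A]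
      matrix_left_invertible_injective[of A] by blast
  then show ?thesis
    unfolding vec.inj_iff_eq_0 by blast
qed

lemma charpoly_root_imp_eigenvector:
  assumes "poly (charpoly A) \<mu> = 0"
  shows "\<exists>v. v \<noteq> 0 \<and> A *v v = \<mu> *\<^sub>R v"
proof -
  have "(\<chi> i j. (if i = j then \<mu> else 0) - A $ i $ j) = \<mu> *\<^sub>R mat 1 - A"
    by (simp add: vec_eq_iff mat_def)
  then have "det (\<mu> *\<^sub>R mat 1 - A) = 0"
    using assms by (simp only: poly_charpoly)
  then obtain v where "v \<noteq> 0" and "(\<mu> *\<^sub>R mat 1 - A) *v v = 0"
    using det_eq_0_imp_kernel_nonzero by blast
  moreover have "(\<mu> *\<^sub>R mat 1 - A) *v v = \<mu> *\<^sub>R v - A *v v"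
    by (simp add: matrix_vector_mult_diff_rdistrib flip: scaleR_matrix_vector_assoc)
  ultimately show ?thesis
    by auto
qed

lemma charpoly_root_pos:
  assumes pos: "\<And>x. x \<noteq> 0 \<Longrightarrow> x \<bullet> (A *v x) > 0"
    and root: "poly (charpoly A) \<mu> = 0"
  shows "\<mu> > 0"
proof -
  obtain v where "v \<noteq> 0" and eigen: "A *v v = \<mu> *\<^sub>R v"
    using charpoly_root_imp_eigenvector[OF root] by blast
  have "0 < v \<bullet> (A *v v)"
    using pos[OF \<open>v \<noteq> 0\<close>] .
  also have "\<dots> = \<mu> * (v \<bullet> v)"
    by (simp add: eigen)
  finally have "0 < \<mu> * (v \<bullet> v)" .
  moreover have "0 < v \<bullet> v"
    using \<open>v \<noteq> 0\<close> by simp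
  ultimately show ?thesis
    by (auto simp add: zero_less_mult_iff)
qed

lemma inner_mult_transpose:
  fixes A :: "real^'n^'m"
  shows "x \<bullet> ((A ** transpose A) *v x) = (norm (transpose A *v x))^2"
  by (metis dot_lmul_matrix matrix_vector_mul_assoc power2_norm_eq_inner transpose_matrix_vector)

lemma inner_mult_transpose_pos:
  fixes A :: "real^'n^'m"
  assumes "inj ((*v) (transpose A))" and "x \<noteq> 0"
  shows "x \<bullet> ((A ** transpose A) *v x) > 0"
proof -
  have "transpose A *v x \<noteq> 0"
    using assms by (metis vec.inj_iff_eq_0)
  then show ?thesis
    by (simp add: inner_mult_transpose)
qed

lemma pos_def_matrix_inj:
  assumes "pos_def_matrix S"
  shows "inj ((*v) S)"
  unfolding vec.inj_iff_eq_0
proof (intro allI impI)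
  fix x
  assume "S *v x = 0"
  then show "x = 0"
    using assms unfolding pos_def_matrix_def by force
qed

lemma pos_def_congruence_pos:
  fixes H :: "real^'p^'q" and S :: "real^'q^'q"
  assumes "rank H = CARD('q)" and "pos_def_matrix S" and "x \<noteq> 0"
  shows "x \<bullet> ((S ** H ** transpose H ** S) *v x) > 0"
proof -
  have S_sym: "transpose S = S"
    using assms(2) unfolding pos_def_matrix_def symmetric_matrix_def by simp
  have "inj ((*v) (transpose H) \<circ> (*v) S)"
    using full_rank_injective rank_transpose assms(1) pos_def_matrix_inj[OF assms(2)]
    by (metis inj_compose)
  moreover have "(*v) (transpose (S ** H)) = (*v) (transpose H) \<circ> (*v) S"
    using S_sym by (simp add: fun_eq_iff matrix_transpose_mul matrix_vector_mul_assoc)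
  ultimately have "x \<bullet> (((S ** H) ** transpose (S ** H)) *v x) > 0"
    using inner_mult_transpose_pos assms(3) by metis
  then show ?thesis
    using S_sym by (simp add: matrix_transpose_mul matrix_mul_assoc)
qed

lemma shrinkage_factor_mono:
  fixes t x y :: real
  assumes "0 < t" "0 < x" "x \<le> y"
  shows "1 / (1 + 1 / (t * x))^2 \<le> 1 / (1 + 1 / (t * y))^2"
proof -
  have "0 < 1 + 1 / (t * y)"
    using assms by (simp add: add_pos_pos)
  moreover have "1 / (t * y) \<le> 1 / (t * x)"
    using assms by (intro divide_left_mono) auto
  ultimately show ?thesis
    by (intro divide_left_mono power_mono mult_pos_pos zero_less_power) auto
qed

lemma shrinkage_factor_gt_iff:
  fixes t x c :: real
  assumes "0 < t" "0 < x" "0 < c"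
  shows "1 / c < 1 / (1 + 1 / (t * x))^2 \<longleftrightarrow> 1 / x < (sqrt c - 1) * t"
proof -
  define a where "a = 1 + 1 / (t * x)"
  have "a > 0"
    using assms by (simp add: a_def add_pos_pos)
  then have "1 / c < 1 / a^2 \<longleftrightarrow> sqrt (a^2) < sqrt c"
    using assms by (simp only: real_sqrt_less_iff) (simp add: divide_simps)
  also have "\<dots> \<longleftrightarrow> a < sqrt c"
    using \<open>a > 0\<close> by simp
  also have "\<dots> \<longleftrightarrow> 1 / (t * x) < sqrt c - 1"
    unfolding a_def by linarith
  also have "\<dots> \<longleftrightarrow> 1 / x < (sqrt c - 1) * t"
    using assms by (simp add: divide_simps ac_simps)
  finally show ?thesis
    by (simp add: a_def)
qed

theorem proposition3p4:
  fixes H :: "real^'p^'q" and \<Sigma> S :: "real^'q^'q"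
    and \<tau> c :: real and lam :: "'q \<Rightarrow> real"
  assumes "CARD('q) \<le> CARD('p)"
    and "\<tau>^2 > 0" and "c > 1"
    and "rank H = CARD('q)"
    and "pos_def_matrix \<Sigma>"
    and "pos_def_matrix S" and "S ** S = matrix_inv \<Sigma>"
    and "charpoly (S ** H ** transpose H ** S) = (\<Prod>i\<in>UNIV. [:- lam i, 1:])"
    and "(\<Sum>i\<in>UNIV. 1 / (1 + 1 / (\<tau>^2 * lam i))^2) > real CARD('q) / c"
  shows "(sqrt c - 1) * \<tau>^2 > 1 / Max (range lam)"
proof -
  have lam_pos: "lam i > 0" for i
  proof (rule charpoly_root_pos)
    show "x \<bullet> ((S ** H ** transpose H ** S) *v x) > 0" if "x \<noteq> 0" for x
      using pos_def_congruence_pos assms(4,6) that .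
    show "poly (charpoly (S ** H ** transpose H ** S)) (lam i) = 0"
      unfolding assms(8) by (auto simp add: poly_prod)
  qed
  define M where "M = Max (range lam)"
  have M_max: "lam i \<le> M" for i
    by (simp add: M_def)
  have M_pos: "M > 0"
    using M_max lam_pos by (meson less_le_trans)
  define f where "f x = 1 / (1 + 1 / (\<tau>^2 * x))^2" for x
  have "real CARD('q) / c < (\<Sum>i\<in>UNIV. f (lam i))"
    using assms(9) by (simp add: f_def)
  also have "\<dots> \<le> (\<Sum>i\<in>(UNIV :: 'q set). f M)"
    unfolding f_def using assms(2) lam_pos M_max
    by (intro sum_mono shrinkage_factor_mono) auto
  finally have "real CARD('q) * (1 / c) < real CARD('q) * f M"
    by simp
  then have "1 / c < f M"
    by (rule mult_left_less_imp_less) simp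
  then show ?thesis
    unfolding f_def M_def[symmetric] using shrinkage_factor_gt_iff assms(2,3) M_pos by simp
qed

end
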